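(* Let $B_1,\dots,B_n$ be independent real-valued service times with finite means $\mu_i$, each with a distribution symmetric around its mean, and put $X_i=B_i-\mu_i$. Fix a sequence $\tau\in\mathsf S_n$ and use the mean-based schedule. Then for each $k\in\{1,\dots,n-1\}$, $W_{k+1}$ is stochastically dominated by $|S_k|$, where $S_k=X_{\tau(1)}+\cdots+X_{\tau(k)}$; consequently $\mathbb EW_{k+1}\le\mathbb E|X_{\tau(1)}+X_{\tau(2)}+\cdots+X_{\tau(k)}|$.
   Context: Under sequence $\tau$ ($\tau(i)$ the patient in slot $i$) and the mean-based schedule (interarrival time after patient $j$ equal to $\mu_j$), the waiting times are $W_1=0$, $W_{i+1}=(W_i+X_{\tau(i)})^+$ with $a^+=\max\{0,a\}$. *)

theory Defs
  imports "HOL-Probability.Probability" "HOL-Combinatorics.Permutations"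
begin

text \<open>Lindley recursion under the mean-based schedule.
  waiting_time X tau i is W_i for i >= 1:
  W_1 = 0, W_(i+1) = max 0 (W_i + X (tau i)).
  (The value at index 0 is an unused convention, equal to 0.)\<close>
fun waiting_time :: "(nat \<Rightarrow> real) \<Rightarrow> (nat \<Rightarrow> nat) \<Rightarrow> nat \<Rightarrow> real" where
  "waiting_time X tau 0 = 0"
| "waiting_time X tau (Suc 0) = 0"
| "waiting_time X tau (Suc (Suc i)) =
     max 0 (waiting_time X tau (Suc i) + X (tau (Suc i)))"

end

theory Submission
  imports Defs
begin

(* Unrolling the Lindley recursion, W_(k+1) is the maximum of the suffix sums
   X_(tau j) + ... + X_(tau k), 1 <= j <= k + 1 (the empty sum being 0).  This is Levy's
   maximal inequality for the reversed sequence: on the event that j is the last index whose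
   suffix sum exceeds t >= 0, negating the terms before j preserves the joint law (independence
   and symmetry), keeps the suffix sums from j on and turns S_k <= t into S_k > t.  Hence
   P(W_(k+1) > t) <= 2 P(S_k > t) = P(|S_k| > t), and the expectations compare by the layer
   cake formula. *)

lemma waiting_time_eq_Max_suffix_sums:
  "waiting_time X \<tau> (Suc m) = (MAX j\<in>{1..Suc m}. \<Sum>i=j..m. X (\<tau> i))"
proof (induction m)
  case 0
  then show ?case by simp
next
  case (Suc m)
  have shift: "(\<Sum>i=j..Suc m. X (\<tau> i)) = (\<Sum>i=j..m. X (\<tau> i)) + X (\<tau> (Suc m))"
    if "j \<in> {1..Suc m}" for j
    using that by (simp add: sum.atLeast_Suc_atMost_Suc_shift)
  have "{1..Suc (Suc m)} = insert (Suc (Suc m)) {1..Suc m}" by auto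
  then have split_last: "(MAX j\<in>{1..Suc (Suc m)}. f j) = max (f (Suc (Suc m))) (MAX j\<in>{1..Suc m}. f j)"
    for f :: "nat \<Rightarrow> real"
    by simp
  have "(MAX j\<in>{1..Suc (Suc m)}. \<Sum>i=j..Suc m. X (\<tau> i))
      = max 0 (MAX j\<in>{1..Suc m}. \<Sum>i=j..Suc m. X (\<tau> i))"
    by (simp only: split_last) simp
  also have "\<dots> = max 0 (MAX j\<in>{1..Suc m}. (\<Sum>i=j..m. X (\<tau> i)) + X (\<tau> (Suc m)))"
    using shift by (metis (no_types, lifting) image_cong)
  also have "\<dots> = max 0 (waiting_time X \<tau> (Suc m) + X (\<tau> (Suc m)))"
    by (simp add: Max_add_commute Suc.IH)
  finally show ?case by simp
qed

lemma sum_sign_flip_prefix: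
  fixes y :: "nat \<Rightarrow> real"
  assumes "1 \<le> j"
  shows "(\<Sum>i=1..k. (if i < j then -1 else 1) * y i) = 2 * (\<Sum>i=j..k. y i) - (\<Sum>i=1..k. y i)"
proof -
  have "(\<Sum>i=1..k. (if i < j then -1 else 1) * y i + y i) = (\<Sum>i\<in>{1..k}. if j \<le> i then 2 * y i else 0)"
    by (intro sum.cong) auto
  also have "\<dots> = (\<Sum>i=j..k. 2 * y i)"
    using assms by (intro sum.mono_neutral_cong_right) auto
  finally show ?thesis
    by (simp add: sum.distrib sum_distrib_left)
qed

definition last_exceedance :: "nat \<Rightarrow> real \<Rightarrow> (nat \<Rightarrow> real) \<Rightarrow> nat \<Rightarrow> bool" where
  "last_exceedance k t y j \<longleftrightarrow> t < (\<Sum>i=j..k. y i) \<and> (\<forall>j'\<in>{j<..k}. (\<Sum>i=j'..k. y i) \<le> t)"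

lemma last_exceedance_exists:
  fixes y :: "nat \<Rightarrow> real"
  assumes "0 \<le> t" and "t < (MAX j\<in>{1..Suc k}. \<Sum>i=j..k. y i)"
  shows "\<exists>j\<in>{1..k}. last_exceedance k t y j"
proof -
  define exceed where "exceed = {j\<in>{1..k}. t < (\<Sum>i=j..k. y i)}"
  obtain j where j: "j \<in> {1..Suc k}" "t < (\<Sum>i=j..k. y i)"
    using assms(2) by (auto simp: Max_gr_iff)
  have "j \<noteq> Suc k"
    using j assms(1) by auto
  with j have "j \<in> exceed"
    by (simp add: exceed_def)
  moreover have "finite exceed"
    by (simp add: exceed_def)
  ultimately have "Max exceed \<in> exceed"
    by (intro Max_in) auto
  then have range: "Max exceed \<in> {1..k}" and exceeds: "t < (\<Sum>i=Max exceed..k. y i)"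
    by (simp_all add: exceed_def)
  have "(\<Sum>i=j'..k. y i) \<le> t" if "j' \<in> {Max exceed<..k}" for j'
  proof -
    have "j' \<notin> exceed"
      using that Max_ge[OF \<open>finite exceed\<close>, of j'] by auto
    then show ?thesis
      using that range by (simp add: exceed_def not_less)
  qed
  with range exceeds show ?thesis
    by (auto simp: last_exceedance_def)
qed

lemma last_exceedance_unique:
  assumes "last_exceedance k t y j" "last_exceedance k t y j'" "j \<le> k" "j' \<le> k"
  shows "j = j'"
proof (rule ccontr)
  have later_le: "(\<Sum>i=b..k. y i) \<le> t" if "last_exceedance k t y a" "a < b" "b \<le> k" for a b
    using that by (simp add: last_exceedance_def)
  have exceeds: "t < (\<Sum>i=j..k. y i)" "t < (\<Sum>i=j'..k. y i)"
    using assms(1,2) by (simp_all add: last_exceedance_def)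
  assume "j \<noteq> j'"
  then have "j < j' \<or> j' < j"
    by linarith
  then show False
    using later_le[OF assms(1) _ assms(4)] later_le[OF assms(2) _ assms(3)] exceeds by fastforce
qed

lemma last_exceedance_cong:
  assumes "\<And>i. j \<le> i \<Longrightarrow> i \<le> k \<Longrightarrow> z i = y i"
  shows "last_exceedance k t z j \<longleftrightarrow> last_exceedance k t y j"
proof -
  have "(\<Sum>i=j'..k. z i) = (\<Sum>i=j'..k. y i)" if "j \<le> j'" for j'
    using assms that by (intro sum.cong) auto
  then show ?thesis
    by (simp add: last_exceedance_def)
qed

lemma last_exceedance_sign_flip:
  fixes y :: "nat \<Rightarrow> real"
  assumes "1 \<le> j" and last: "last_exceedance k t y j" and "(\<Sum>i=1..k. y i) \<le> t"
  shows "last_exceedance k t (\<lambda>i. (if i < j then -1 else 1) * y i) j"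
    and "t < (\<Sum>i=1..k. (if i < j then -1 else 1) * y i)"
proof -
  show "last_exceedance k t (\<lambda>i. (if i < j then -1 else 1) * y i) j"
    by (rule last_exceedance_cong[THEN iffD2, OF _ last]) simp
  show "t < (\<Sum>i=1..k. (if i < j then -1 else 1) * y i)"
    unfolding sum_sign_flip_prefix[OF assms(1)] using last assms(3) by (simp add: last_exceedance_def)
qed

lemma borel_measurable_PiM_component [measurable]:
  "(\<lambda>y. y i) \<in> borel_measurable (\<Pi>\<^sub>M j\<in>I. (borel :: 'b::topological_space measure))"
proof (cases "i \<in> I")
  case True
  then show ?thesis by (rule measurable_component_singleton)
next
  case False
  then have "(\<lambda>y. y i) \<in> borel_measurable (\<Pi>\<^sub>M j\<in>I. borel) \<longleftrightarrow>
      (\<lambda>y. undefined) \<in> borel_measurable (\<Pi>\<^sub>M j\<in>I. (borel :: 'b measure))"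
    using measurable_cong[of "\<Pi>\<^sub>M j\<in>I. borel" "\<lambda>y. y i" "\<lambda>y. undefined" borel]
    by (auto simp: space_PiM PiE_def extensional_def)
  then show ?thesis by simp
qed

lemma nn_integral_layer_cake:
  fixes f :: "'a \<Rightarrow> real"
  assumes "sigma_finite_measure M" and f: "f \<in> borel_measurable M"
    and nonneg: "\<And>x. x \<in> space M \<Longrightarrow> 0 \<le> f x"
  shows "(\<integral>\<^sup>+x. ennreal (f x) \<partial>M) = (\<integral>\<^sup>+t\<in>{0..}. emeasure M {x\<in>space M. t < f x} \<partial>lborel)"
proof -
  interpret sigma_finite_measure M by fact
  interpret pair_sigma_finite M lborel
    by (intro pair_sigma_finite.intro assms lborel.sigma_finite_measure_axioms)
  have "(\<integral>\<^sup>+x. ennreal (f x) \<partial>M) = (\<integral>\<^sup>+x. (\<integral>\<^sup>+t. indicator {0..<f x} t \<partial>lborel) \<partial>M)"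
    by (intro nn_integral_cong) (simp add: nonneg)
  also have "\<dots> = (\<integral>\<^sup>+t. (\<integral>\<^sup>+x. indicator {0..<f x} t \<partial>M) \<partial>lborel)"
  proof (rule Fubini'[symmetric])
    have "case_prod (\<lambda>x t. indicator {0..<f x} t :: ennreal)
        = (\<lambda>p. if 0 \<le> snd p \<and> snd p < f (fst p) then 1 else 0)"
      by (auto simp: fun_eq_iff indicator_def)
    also have "\<dots> \<in> borel_measurable (M \<Otimes>\<^sub>M lborel)"
      using f by measurable
    finally show "case_prod (\<lambda>x t. indicator {0..<f x} t :: ennreal) \<in> borel_measurable (M \<Otimes>\<^sub>M lborel)" .
  qed
  also have "\<dots> = (\<integral>\<^sup>+t\<in>{0..}. emeasure M {x\<in>space M. t < f x} \<partial>lborel)"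
  proof (intro nn_integral_cong)
    fix t :: real
    have "(\<integral>\<^sup>+x. indicator {0..<f x} t \<partial>M) = (\<integral>\<^sup>+x. indicator {x\<in>space M. t < f x} x * indicator {0..} t \<partial>M)"
      by (intro nn_integral_cong) (auto simp: indicator_def)
    also have "\<dots> = emeasure M {x\<in>space M. t < f x} * indicator {0..} t"
      using f by (simp add: nn_integral_multc)
    finally show "(\<integral>\<^sup>+x. indicator {0..<f x} t \<partial>M) = emeasure M {x\<in>space M. t < f x} * indicator {0..} t" .
  qed
  finally show ?thesis .
qed

context prob_space
begin

lemma indep_sets_reindex:
  assumes "inj_on f I" and "indep_sets F (f ` I)"
  shows "indep_sets (\<lambda>i. F (f i)) I"
  unfolding indep_sets_def
proof (intro conjI ballI allI impI)
  show "F (f i) \<subseteq> events" if "i \<in> I" for i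
    using assms(2) that by (auto simp: indep_sets_def)
  fix J A assume J: "J \<subseteq> I" "J \<noteq> {}" "finite J" and A: "A \<in> (\<Pi> j\<in>J. F (f j))"
  have inj: "inj_on f J" using assms(1) J(1) by (rule inj_on_subset)
  define A' where "A' l = A (the_inv_into J f l)" for l
  have A'f: "A' (f j) = A j" if "j \<in> J" for j
    using the_inv_into_f_f[OF inj that] by (simp add: A'_def)
  have "A' \<in> (\<Pi> l\<in>f ` J. F l)"
    using A by (auto simp: A'f)
  moreover have "f ` J \<subseteq> f ` I" "f ` J \<noteq> {}" "finite (f ` J)"
    using J by auto
  ultimately have "prob (\<Inter>l\<in>f ` J. A' l) = (\<Prod>l\<in>f ` J. prob (A' l))"
    using assms(2) unfolding indep_sets_def by blast
  then show "prob (\<Inter>j\<in>J. A j) = (\<Prod>j\<in>J. prob (A j))"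
    by (simp add: prod.reindex[OF inj] A'f)
qed

lemma indep_vars_reindex:
  assumes "inj_on f I" and "indep_vars M' X (f ` I)"
  shows "indep_vars (\<lambda>i. M' (f i)) (\<lambda>i. X (f i)) I"
  using assms indep_sets_reindex[OF assms(1)] by (auto simp: indep_vars_def)

lemma distr_sign_flip_eq:
  fixes Y :: "'i \<Rightarrow> 'a \<Rightarrow> real"
  assumes indep: "indep_vars (\<lambda>_. borel) Y I"
    and symm: "\<And>i. i \<in> I \<Longrightarrow> distr M borel (Y i) = distr M borel (\<lambda>\<omega>. - Y i \<omega>)"
    and sign: "\<And>i. i \<in> I \<Longrightarrow> s i = 1 \<or> s i = -1"
  shows "distr M (\<Pi>\<^sub>M i\<in>I. borel) (\<lambda>\<omega>. \<lambda>i\<in>I. s i * Y i \<omega>)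
       = distr M (\<Pi>\<^sub>M i\<in>I. borel) (\<lambda>\<omega>. \<lambda>i\<in>I. Y i \<omega>)"
proof (cases "I = {}")
  case True
  then show ?thesis by (simp add: restrict_def)
next
  case False
  have rv: "Y i \<in> borel_measurable M" if "i \<in> I" for i
    using indep that by (simp add: indep_vars_def)
  have indep_s: "indep_vars (\<lambda>_. borel) (\<lambda>i \<omega>. s i * Y i \<omega>) I"
    using indep by (rule indep_vars_compose2) simp
  have marginal: "distr M borel (\<lambda>\<omega>. s i * Y i \<omega>) = distr M borel (Y i)" if "i \<in> I" for i
    using sign[OF that] symm[OF that] by auto
  have "distr M (\<Pi>\<^sub>M i\<in>I. borel) (\<lambda>\<omega>. \<lambda>i\<in>I. s i * Y i \<omega>)
      = (\<Pi>\<^sub>M i\<in>I. distr M borel (\<lambda>\<omega>. s i * Y i \<omega>))"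
    by (rule indep_vars_iff_distr_eq_PiM'[OF False, THEN iffD1, OF _ indep_s]) (use rv in measurable)
  also have "\<dots> = (\<Pi>\<^sub>M i\<in>I. distr M borel (Y i))"
    by (rule PiM_cong) (simp_all add: marginal)
  also have "\<dots> = distr M (\<Pi>\<^sub>M i\<in>I. borel) (\<lambda>\<omega>. \<lambda>i\<in>I. Y i \<omega>)"
    by (rule indep_vars_iff_distr_eq_PiM'[OF False, THEN iffD1, OF _ indep, symmetric]) (simp add: rv)
  finally show ?thesis .
qed

lemma distr_sum_symmetric:
  fixes Y :: "'i \<Rightarrow> 'a \<Rightarrow> real"
  assumes indep: "indep_vars (\<lambda>_. borel) Y I"
    and symm: "\<And>i. i \<in> I \<Longrightarrow> distr M borel (Y i) = distr M borel (\<lambda>\<omega>. - Y i \<omega>)"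
  shows "distr M borel (\<lambda>\<omega>. \<Sum>i\<in>I. Y i \<omega>) = distr M borel (\<lambda>\<omega>. - (\<Sum>i\<in>I. Y i \<omega>))"
proof -
  let ?P = "\<Pi>\<^sub>M i\<in>I. (borel :: real measure)"
  have rv: "Y i \<in> borel_measurable M" if "i \<in> I" for i
    using indep that by (simp add: indep_vars_def)
  have total: "(\<lambda>y. \<Sum>i\<in>I. y i) \<in> borel_measurable ?P"
    by (intro borel_measurable_sum measurable_component_singleton)
  have law: "distr M borel (\<lambda>\<omega>. \<Sum>i\<in>I. s i * Y i \<omega>)
      = distr (distr M ?P (\<lambda>\<omega>. \<lambda>i\<in>I. s i * Y i \<omega>)) borel (\<lambda>y. \<Sum>i\<in>I. y i)" for s :: "'i \<Rightarrow> real"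
    using rv total by (subst distr_distr) (auto intro!: distr_cong measurable_restrict)
  have "distr M borel (\<lambda>\<omega>. \<Sum>i\<in>I. Y i \<omega>) = distr M borel (\<lambda>\<omega>. \<Sum>i\<in>I. 1 * Y i \<omega>)"
    by simp
  also have "\<dots> = distr M borel (\<lambda>\<omega>. \<Sum>i\<in>I. -1 * Y i \<omega>)"
    unfolding law using distr_sign_flip_eq[OF indep symm, of "\<lambda>_. 1"] distr_sign_flip_eq[OF indep symm, of "\<lambda>_. -1"]
    by simp
  finally show ?thesis
    by (simp add: sum_negf)
qed

lemma prob_abs_gt_symmetric:
  fixes X :: "'a \<Rightarrow> real"
  assumes X: "X \<in> borel_measurable M"
    and symm: "distr M borel X = distr M borel (\<lambda>\<omega>. - X \<omega>)" and "0 \<le> t"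
  shows "prob {\<omega>\<in>space M. t < \<bar>X \<omega>\<bar>} = 2 * prob {\<omega>\<in>space M. t < X \<omega>}"
proof -
  have "prob {\<omega>\<in>space M. t < - X \<omega>} = measure (distr M borel (\<lambda>\<omega>. - X \<omega>)) {t<..}"
    using X by (subst measure_distr) (auto intro!: arg_cong[where f = prob])
  also have "\<dots> = prob {\<omega>\<in>space M. t < X \<omega>}"
    unfolding symm[symmetric] using X by (subst measure_distr) (auto intro!: arg_cong[where f = prob])
  finally have neg: "prob {\<omega>\<in>space M. t < - X \<omega>} = prob {\<omega>\<in>space M. t < X \<omega>}" .
  have "prob {\<omega>\<in>space M. t < \<bar>X \<omega>\<bar>} = prob ({\<omega>\<in>space M. t < X \<omega>} \<union> {\<omega>\<in>space M. t < - X \<omega>})"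
    by (rule arg_cong[where f = prob]) auto
  also have "\<dots> = prob {\<omega>\<in>space M. t < X \<omega>} + prob {\<omega>\<in>space M. t < - X \<omega>}"
    using X \<open>0 \<le> t\<close> by (intro finite_measure_Union) auto
  finally show ?thesis
    using neg by simp
qed

lemma prob_le_twice_by_reflection:
  assumes V: "V \<in> M \<rightarrow>\<^sub>M N" and TV: "(\<lambda>\<omega>. T (V \<omega>)) \<in> M \<rightarrow>\<^sub>M N"
    and law: "distr M N (\<lambda>\<omega>. T (V \<omega>)) = distr M N V"
    and sets: "A \<in> sets N" "G \<in> sets N"
    and reflect: "\<And>y. y \<in> A - G \<Longrightarrow> T y \<in> A \<inter> G"
  shows "prob (V -` A \<inter> space M) \<le> 2 * prob (V -` (A \<inter> G) \<inter> space M)"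
proof -
  have "prob (V -` (A - G) \<inter> space M) \<le> prob ((\<lambda>\<omega>. T (V \<omega>)) -` (A \<inter> G) \<inter> space M)"
    using reflect by (intro finite_measure_mono measurable_sets[OF TV]) (auto simp: sets)
  also have "\<dots> = prob (V -` (A \<inter> G) \<inter> space M)"
    using arg_cong[OF law, of "\<lambda>N'. measure N' (A \<inter> G)"] sets
    by (simp add: measure_distr V TV)
  finally have diff: "prob (V -` (A - G) \<inter> space M) \<le> prob (V -` (A \<inter> G) \<inter> space M)" .
  have "prob (V -` A \<inter> space M) = prob ((V -` (A \<inter> G) \<inter> space M) \<union> (V -` (A - G) \<inter> space M))"
    by (rule arg_cong[where f = prob]) auto
  also have "\<dots> = prob (V -` (A \<inter> G) \<inter> space M) + prob (V -` (A - G) \<inter> space M)"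
    using sets by (intro finite_measure_Union measurable_sets[OF V]) auto
  finally show ?thesis using diff by simp
qed

lemma events_last_exceedance:
  fixes Y :: "nat \<Rightarrow> 'a \<Rightarrow> real"
  assumes rv: "\<And>i. i \<in> {1..k} \<Longrightarrow> Y i \<in> borel_measurable M" and "1 \<le> j"
  shows "{\<omega>\<in>space M. last_exceedance k t (\<lambda>i. Y i \<omega>) j} \<in> events"
proof -
  let ?P = "\<Pi>\<^sub>M i\<in>{1..k}. (borel :: real measure)"
  have V: "(\<lambda>\<omega>. \<lambda>i\<in>{1..k}. Y i \<omega>) \<in> M \<rightarrow>\<^sub>M ?P"
    by (intro measurable_restrict rv)
  have "last_exceedance k t (\<lambda>i\<in>{1..k}. Y i \<omega>) j \<longleftrightarrow> last_exceedance k t (\<lambda>i. Y i \<omega>) j" for \<omega>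
    using \<open>1 \<le> j\<close> by (intro last_exceedance_cong) auto
  then have "{\<omega>\<in>space M. last_exceedance k t (\<lambda>i. Y i \<omega>) j}
      = (\<lambda>\<omega>. \<lambda>i\<in>{1..k}. Y i \<omega>) -` {y\<in>space ?P. last_exceedance k t y j} \<inter> space M"
    using measurable_space[OF V] by blast
  also have "\<dots> \<in> events"
    by (intro measurable_sets[OF V]) (unfold last_exceedance_def, measurable)
  finally show ?thesis .
qed

lemma prob_last_exceedance_le_twice:
  fixes Y :: "nat \<Rightarrow> 'a \<Rightarrow> real"
  assumes indep: "indep_vars (\<lambda>_. borel) Y {1..k}"
    and symm: "\<And>i. i \<in> {1..k} \<Longrightarrow> distr M borel (Y i) = distr M borel (\<lambda>\<omega>. - Y i \<omega>)"
    and j: "j \<in> {1..k}"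
  shows "prob {\<omega>\<in>space M. last_exceedance k t (\<lambda>i. Y i \<omega>) j}
       \<le> 2 * prob {\<omega>\<in>space M. last_exceedance k t (\<lambda>i. Y i \<omega>) j \<and> t < (\<Sum>i=1..k. Y i \<omega>)}"
proof -
  define P where "P = (\<Pi>\<^sub>M i\<in>{1..k}. (borel :: real measure))"
  define V where "V \<omega> = (\<lambda>i\<in>{1..k}. Y i \<omega>)" for \<omega>
  define s where "s i = (if i < j then -1 else 1 :: real)" for i
  define flip where "flip y = (\<lambda>i\<in>{1..k}. s i * y i)" for y :: "nat \<Rightarrow> real"
  define A where "A = {y\<in>space P. last_exceedance k t y j}"
  define G where "G = {y\<in>space P. t < (\<Sum>i=1..k. y i)}"
  have rv: "Y i \<in> borel_measurable M" if "i \<in> {1..k}" for i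
    using indep that by (simp add: indep_vars_def)
  have V: "V \<in> M \<rightarrow>\<^sub>M P"
    unfolding V_def P_def by (intro measurable_restrict rv)
  have flip_V: "(\<lambda>\<omega>. flip (V \<omega>)) = (\<lambda>\<omega>. \<lambda>i\<in>{1..k}. s i * Y i \<omega>)"
    by (auto simp: fun_eq_iff flip_def V_def)
  have flip_V_meas: "(\<lambda>\<omega>. flip (V \<omega>)) \<in> M \<rightarrow>\<^sub>M P"
    unfolding flip_V P_def using rv by (intro measurable_restrict) auto
  have law: "distr M P (\<lambda>\<omega>. flip (V \<omega>)) = distr M P V"
    unfolding flip_V unfolding P_def V_def by (rule distr_sign_flip_eq[OF indep symm]) (auto simp: s_def)
  have sets: "A \<in> sets P" "G \<in> sets P"
    unfolding A_def G_def last_exceedance_def P_def by measurable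
  have "flip y \<in> A \<inter> G" if y: "y \<in> A - G" for y
  proof -
    have "last_exceedance k t y j" "(\<Sum>i=1..k. y i) \<le> t"
      using y by (auto simp: A_def G_def)
    then have "last_exceedance k t (\<lambda>i. s i * y i) j" "t < (\<Sum>i=1..k. s i * y i)"
      using last_exceedance_sign_flip[of j k t y] j by (simp_all add: s_def)
    moreover have "last_exceedance k t (flip y) j \<longleftrightarrow> last_exceedance k t (\<lambda>i. s i * y i) j"
      unfolding flip_def using j by (intro last_exceedance_cong) auto
    moreover have "(\<Sum>i=1..k. flip y i) = (\<Sum>i=1..k. s i * y i)"
      unfolding flip_def by (intro sum.cong) auto
    moreover have "flip y \<in> space P"
      by (simp add: flip_def P_def space_PiM)
    ultimately show ?thesis
      by (simp add: A_def G_def)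
  qed
  then have "prob (V -` A \<inter> space M) \<le> 2 * prob (V -` (A \<inter> G) \<inter> space M)"
    by (intro prob_le_twice_by_reflection[OF V flip_V_meas law sets])
  moreover have "V -` A \<inter> space M = {\<omega>\<in>space M. last_exceedance k t (\<lambda>i. Y i \<omega>) j}"
    and "V -` (A \<inter> G) \<inter> space M
      = {\<omega>\<in>space M. last_exceedance k t (\<lambda>i. Y i \<omega>) j \<and> t < (\<Sum>i=1..k. Y i \<omega>)}"
  proof -
    have "last_exceedance k t (V \<omega>) j \<longleftrightarrow> last_exceedance k t (\<lambda>i. Y i \<omega>) j" for \<omega>
      unfolding V_def using j by (intro last_exceedance_cong) auto
    moreover have "(\<Sum>i=1..k. V \<omega> i) = (\<Sum>i=1..k. Y i \<omega>)" for \<omega>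
      unfolding V_def by (intro sum.cong) auto
    ultimately show "V -` A \<inter> space M = {\<omega>\<in>space M. last_exceedance k t (\<lambda>i. Y i \<omega>) j}"
      and "V -` (A \<inter> G) \<inter> space M
        = {\<omega>\<in>space M. last_exceedance k t (\<lambda>i. Y i \<omega>) j \<and> t < (\<Sum>i=1..k. Y i \<omega>)}"
      using measurable_space[OF V] by (auto simp: A_def G_def)
  qed
  ultimately show ?thesis
    by simp
qed

lemma levy_inequality_suffix_sums:
  fixes Y :: "nat \<Rightarrow> 'a \<Rightarrow> real"
  assumes indep: "indep_vars (\<lambda>_. borel) Y {1..k}"
    and symm: "\<And>i. i \<in> {1..k} \<Longrightarrow> distr M borel (Y i) = distr M borel (\<lambda>\<omega>. - Y i \<omega>)"
    and "0 \<le> t"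
  shows "prob {\<omega>\<in>space M. t < (MAX j\<in>{1..Suc k}. \<Sum>i=j..k. Y i \<omega>)}
       \<le> 2 * prob {\<omega>\<in>space M. t < (\<Sum>i=1..k. Y i \<omega>)}"
proof -
  define E where "E j = {\<omega>\<in>space M. last_exceedance k t (\<lambda>i. Y i \<omega>) j}" for j
  define S where "S = {\<omega>\<in>space M. t < (\<Sum>i=1..k. Y i \<omega>)}"
  have rv: "Y i \<in> borel_measurable M" if "i \<in> {1..k}" for i
    using indep that by (simp add: indep_vars_def)
  have E_events: "E j \<in> events" if "j \<in> {1..k}" for j
    unfolding E_def using rv that by (intro events_last_exceedance) auto
  have S_event: "S \<in> events"
    unfolding S_def using rv by measurable
  have "{\<omega>\<in>space M. t < (MAX j\<in>{1..Suc k}. \<Sum>i=j..k. Y i \<omega>)} \<subseteq> (\<Union>j\<in>{1..k}. E j)"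
    using last_exceedance_exists[OF \<open>0 \<le> t\<close>] by (auto simp: E_def)
  then have "prob {\<omega>\<in>space M. t < (MAX j\<in>{1..Suc k}. \<Sum>i=j..k. Y i \<omega>)} \<le> prob (\<Union>j\<in>{1..k}. E j)"
    using E_events by (intro finite_measure_mono sets.finite_UN) auto
  also have "\<dots> \<le> (\<Sum>j\<in>{1..k}. prob (E j))"
    using E_events by (intro finite_measure_subadditive_finite) auto
  also have "\<dots> \<le> (\<Sum>j\<in>{1..k}. 2 * prob (E j \<inter> S))"
  proof (intro sum_mono)
    fix j assume "j \<in> {1..k}"
    moreover have "E j \<inter> S = {\<omega>\<in>space M. last_exceedance k t (\<lambda>i. Y i \<omega>) j \<and> t < (\<Sum>i=1..k. Y i \<omega>)}"
      by (auto simp: E_def S_def)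
    ultimately show "prob (E j) \<le> 2 * prob (E j \<inter> S)"
      using prob_last_exceedance_le_twice[OF indep symm] by (simp add: E_def)
  qed
  also have "\<dots> = 2 * prob (\<Union>j\<in>{1..k}. E j \<inter> S)"
    using E_events S_event last_exceedance_unique
    by (subst finite_measure_finite_Union) (auto simp: sum_distrib_left disjoint_family_on_def E_def)
  also have "\<dots> \<le> 2 * prob S"
    using S_event by (intro mult_left_mono finite_measure_mono) auto
  finally show ?thesis
    by (simp add: S_def)
qed

lemma prob_Max_suffix_sums_gt_le_prob_abs_sum_gt:
  fixes Y :: "nat \<Rightarrow> 'a \<Rightarrow> real"
  assumes indep: "indep_vars (\<lambda>_. borel) Y {1..k}"
    and symm: "\<And>i. i \<in> {1..k} \<Longrightarrow> distr M borel (Y i) = distr M borel (\<lambda>\<omega>. - Y i \<omega>)"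
  shows "prob {\<omega>\<in>space M. t < (MAX j\<in>{1..Suc k}. \<Sum>i=j..k. Y i \<omega>)}
       \<le> prob {\<omega>\<in>space M. t < \<bar>\<Sum>i=1..k. Y i \<omega>\<bar>}"
proof (cases "t < 0")
  case True
  then have "{\<omega>\<in>space M. t < \<bar>\<Sum>i=1..k. Y i \<omega>\<bar>} = space M"
    by auto
  then show ?thesis
    by (simp add: prob_space)
next
  case False
  have sum: "(\<lambda>\<omega>. \<Sum>i=1..k. Y i \<omega>) \<in> borel_measurable M"
    using indep by (intro borel_measurable_sum) (simp add: indep_vars_def)
  have "0 \<le> t"
    using False by simp
  then have "prob {\<omega>\<in>space M. t < (MAX j\<in>{1..Suc k}. \<Sum>i=j..k. Y i \<omega>)}
      \<le> 2 * prob {\<omega>\<in>space M. t < (\<Sum>i=1..k. Y i \<omega>)}"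
    using levy_inequality_suffix_sums[OF indep symm] by simp
  also have "\<dots> = prob {\<omega>\<in>space M. t < \<bar>\<Sum>i=1..k. Y i \<omega>\<bar>}"
    using prob_abs_gt_symmetric[OF sum distr_sum_symmetric[OF indep symm]] False by simp
  finally show ?thesis .
qed

lemma expectation_mono_tail:
  fixes X Y :: "'a \<Rightarrow> real"
  assumes X: "X \<in> borel_measurable M" and Y: "integrable M Y"
    and nonneg: "\<And>\<omega>. \<omega> \<in> space M \<Longrightarrow> 0 \<le> X \<omega>" "\<And>\<omega>. \<omega> \<in> space M \<Longrightarrow> 0 \<le> Y \<omega>"
    and tail: "\<And>t. 0 \<le> t \<Longrightarrow> prob {\<omega>\<in>space M. t < X \<omega>} \<le> prob {\<omega>\<in>space M. t < Y \<omega>}"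
  shows "expectation X \<le> expectation Y"
proof -
  have sigma_finite: "sigma_finite_measure M"
    by (rule prob_space_imp_sigma_finite) (rule prob_space_axioms)
  have "(\<integral>\<^sup>+\<omega>. ennreal (X \<omega>) \<partial>M) = (\<integral>\<^sup>+t\<in>{0..}. emeasure M {\<omega>\<in>space M. t < X \<omega>} \<partial>lborel)"
    using sigma_finite X nonneg(1) by (rule nn_integral_layer_cake)
  also have "\<dots> \<le> (\<integral>\<^sup>+t\<in>{0..}. emeasure M {\<omega>\<in>space M. t < Y \<omega>} \<partial>lborel)"
    by (intro nn_integral_mono) (auto simp: emeasure_eq_measure tail split: split_indicator)
  also have "\<dots> = (\<integral>\<^sup>+\<omega>. ennreal (Y \<omega>) \<partial>M)"
    using sigma_finite _ nonneg(2) by (rule nn_integral_layer_cake[symmetric]) (use Y in simp)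
  finally have "(\<integral>\<^sup>+\<omega>. ennreal (X \<omega>) \<partial>M) \<le> ennreal (expectation Y)"
    using Y nonneg(2) by (simp add: nn_integral_eq_integral)
  then show ?thesis
    using X nonneg by (simp add: integral_eq_nn_integral enn2real_leI integral_nonneg)
qed

lemma expectation_Max_suffix_sums_le_abs_sum:
  fixes Y :: "nat \<Rightarrow> 'a \<Rightarrow> real"
  assumes indep: "indep_vars (\<lambda>_. borel) Y {1..k}"
    and symm: "\<And>i. i \<in> {1..k} \<Longrightarrow> distr M borel (Y i) = distr M borel (\<lambda>\<omega>. - Y i \<omega>)"
    and integ: "\<And>i. i \<in> {1..k} \<Longrightarrow> integrable M (Y i)"
  shows "expectation (\<lambda>\<omega>. MAX j\<in>{1..Suc k}. \<Sum>i=j..k. Y i \<omega>) \<le> expectation (\<lambda>\<omega>. \<bar>\<Sum>i=1..k. Y i \<omega>\<bar>)"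
proof (rule expectation_mono_tail)
  show "(\<lambda>\<omega>. MAX j\<in>{1..Suc k}. \<Sum>i=j..k. Y i \<omega>) \<in> borel_measurable M"
    using indep by (intro borel_measurable_Max borel_measurable_sum) (auto simp: indep_vars_def)
  show "integrable M (\<lambda>\<omega>. \<bar>\<Sum>i=1..k. Y i \<omega>\<bar>)"
    using integ by (intro integrable_abs Bochner_Integration.integrable_sum)
  show "0 \<le> (MAX j\<in>{1..Suc k}. \<Sum>i=j..k. Y i \<omega>)" for \<omega>
    by (rule Max_ge_iff[THEN iffD2]) (auto intro!: bexI[of _ "Suc k"])
  show "prob {\<omega>\<in>space M. t < (MAX j\<in>{1..Suc k}. \<Sum>i=j..k. Y i \<omega>)}
      \<le> prob {\<omega>\<in>space M. t < \<bar>\<Sum>i=1..k. Y i \<omega>\<bar>}" for t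
    by (rule prob_Max_suffix_sums_gt_le_prob_abs_sum_gt[OF indep symm])
qed simp

end

theorem lemma3p2:
  fixes M :: "'a measure" and B :: "nat \<Rightarrow> 'a \<Rightarrow> real" and \<mu> :: "nat \<Rightarrow> real"
    and n :: nat and \<tau> :: "nat \<Rightarrow> nat" and k :: nat
  assumes "prob_space M"
    and rv: "\<And>i. i \<in> {1..n} \<Longrightarrow> B i \<in> borel_measurable M"
    and indep: "prob_space.indep_vars M (\<lambda>_. borel) B {1..n}"
    and integ: "\<And>i. i \<in> {1..n} \<Longrightarrow> integrable M (B i)"
    and mean: "\<And>i. i \<in> {1..n} \<Longrightarrow> \<mu> i = prob_space.expectation M (B i)"
    and symm: "\<And>i. i \<in> {1..n} \<Longrightarrow>
        distr M borel (\<lambda>\<omega>. B i \<omega> - \<mu> i) = distr M borel (\<lambda>\<omega>. - (B i \<omega> - \<mu> i))"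
    and perm: "\<tau> permutes {1..n}"
    and k: "1 \<le> k" "k \<le> n - 1"
  shows "(\<forall>t::real. prob_space.prob M {\<omega> \<in> space M.
              waiting_time (\<lambda>j. B j \<omega> - \<mu> j) \<tau> (k + 1) > t}
           \<le> prob_space.prob M {\<omega> \<in> space M.
              \<bar>\<Sum>i = 1..k. B (\<tau> i) \<omega> - \<mu> (\<tau> i)\<bar> > t})
       \<and> prob_space.expectation M (\<lambda>\<omega>. waiting_time (\<lambda>j. B j \<omega> - \<mu> j) \<tau> (k + 1))
         \<le> prob_space.expectation M (\<lambda>\<omega>. \<bar>\<Sum>i = 1..k. B (\<tau> i) \<omega> - \<mu> (\<tau> i)\<bar>)"
proof -
  interpret prob_space M by fact
  define Y where "Y i \<omega> = B (\<tau> i) \<omega> - \<mu> (\<tau> i)" for i \<omega>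
  have \<tau>_range: "\<tau> ` {1..k} \<subseteq> {1..n}"
    using k by (intro image_subsetI permutes_in_image[OF perm, THEN iffD2]) auto
  then have \<tau>_in: "\<tau> i \<in> {1..n}" if "i \<in> {1..k}" for i
    using that by blast
  have "indep_vars (\<lambda>_. borel) (\<lambda>l \<omega>. B l \<omega> - \<mu> l) (\<tau> ` {1..k})"
    using indep_vars_subset[OF indep \<tau>_range] by (rule indep_vars_compose2) simp
  moreover have "inj_on \<tau> {1..k}"
    using permutes_inj[OF perm] by (rule inj_on_subset) simp
  ultimately have indep_Y: "indep_vars (\<lambda>_. borel) Y {1..k}"
    unfolding Y_def by (rule indep_vars_reindex[rotated])
  have symm_Y: "distr M borel (Y i) = distr M borel (\<lambda>\<omega>. - Y i \<omega>)" if "i \<in> {1..k}" for i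
    using symm[OF \<tau>_in[OF that]] by (simp add: Y_def[abs_def])
  have integ_Y: "integrable M (Y i)" if "i \<in> {1..k}" for i
    using integ[OF \<tau>_in[OF that]] by (simp add: Y_def[abs_def])
  have W: "waiting_time (\<lambda>j. B j \<omega> - \<mu> j) \<tau> (k + 1) = (MAX j\<in>{1..Suc k}. \<Sum>i=j..k. Y i \<omega>)" for \<omega>
    by (simp add: waiting_time_eq_Max_suffix_sums Y_def)
  have S: "(\<Sum>i=1..k. B (\<tau> i) \<omega> - \<mu> (\<tau> i)) = (\<Sum>i=1..k. Y i \<omega>)" for \<omega>
    by (simp add: Y_def)
  show ?thesis
    unfolding W S
    using prob_Max_suffix_sums_gt_le_prob_abs_sum_gt[OF indep_Y symm_Y]
      expectation_Max_suffix_sums_le_abs_sum[OF indep_Y symm_Y integ_Y]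
    by simp
qed

end
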